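(* Let $\mu$ be a probability measure on $\mathbb{C}$ with compact support, and let $X_1, X_2, \ldots$ be iid random variables with distribution $\mu$. For each $n\ge1$ let $\xi_1^{(n)}, \ldots, \xi_{k_n}^{(n)}$ be deterministic complex numbers, where $k_n \le K$ for some constant $K$ independent of $n$ (no bound on the magnitudes $|\xi_l^{(n)}|$ is assumed). Fix $\varepsilon > 0$ and suppose that for all sufficiently large $n$: none of $\xi_1^{(n)}, \ldots, \xi_{k_n}^{(n)}$ lies in $N_\mu(3\varepsilon)\setminus N_\mu(\varepsilon)$, the value $\xi_1^{(n)}$ lies outside $N_\mu(3\varepsilon)$, and $\xi_2^{(n)},\ldots,\xi_{k_n}^{(n)}$ lie in $N_\mu(\varepsilon)$. Then there is a constant $C>0$ such that, almost surely, for all sufficiently large $n$, the polynomial \[ p_n(z) := \prod_{j=1}^{n-k_n} (z - X_j) \prod_{l=1}^{k_n} (z - \xi_l^{(n)}) \] has exactly one critical point $w_1(p_n)$ outside $N_\mu(2\varepsilon)$, and it satisfies \[ |w_1(p_n) - \xi_1^{(n)}| \le \frac{C}{n}\left(1 + |\xi_1^{(n)}|\right), \] i.e. $w_1(p_n) = \xi_1^{(n)}(1 + O(1/n)) + O(1/n)$.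
   Context: For a probability measure $\mu$ on $\mathbb{C}$, $m_\mu(z) := \int_{\mathbb{C}} \frac{d\mu(x)}{z-x}$ for $z \notin \operatorname{supp}(\mu)$; $M_\mu := \{ z \in \mathbb{C}\setminus \operatorname{supp}(\mu) : m_\mu(z) = 0\}$; and $N_\mu(\varepsilon) := \{ z \in \mathbb{C} : \operatorname{dist}(z, \operatorname{supp}(\mu) \cup M_\mu) < \varepsilon\}$. A critical point of a polynomial is a zero of its derivative. *)

theory Defs
  imports "HOL-Probability.Probability" "HOL-Computational_Algebra.Polynomial"
begin

definition msupp :: "complex measure \<Rightarrow> complex set" where
  "msupp \<mu> = {z. \<forall>e>0. measure \<mu> (ball z e) > 0}"

definition cst :: "complex measure \<Rightarrow> complex \<Rightarrow> complex" where
  "cst \<mu> z = integral\<^sup>L \<mu> (\<lambda>x. 1 / (z - x))"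

definition Mset :: "complex measure \<Rightarrow> complex set" where
  "Mset \<mu> = {z. z \<notin> msupp \<mu> \<and> cst \<mu> z = 0}"

definition Nnbhd :: "complex measure \<Rightarrow> real \<Rightarrow> complex set" where
  "Nnbhd \<mu> e = {z. infdist z (msupp \<mu> \<union> Mset \<mu>) < e}"

definition pn :: "(nat \<Rightarrow> complex) \<Rightarrow> nat \<Rightarrow> (nat \<Rightarrow> complex) \<Rightarrow> nat \<Rightarrow> complex poly" where
  "pn x k xi n = (\<Prod>j\<in>{1..n - k}. [:- x j, 1:]) * (\<Prod>l\<in>{1..k}. [:- xi l, 1:])"

end

theory Submission
  imports Defs
begin

text \<open>For z outside N_\<mu>(2\<epsilon>), the critical points of p_n are the zeros of
  p_n'/p_n = 1/(z - \<xi>_1) + g_n(z), where g_n(z) = \<Sum>_j 1/(z - X_j) + \<Sum>_{l \<ge> 2} 1/(z - \<xi>_l).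
  By a law of large numbers (Hoeffding and Borel--Cantelli at the points of a finite net,
  together with the Lipschitz continuity of the sums), almost surely
  |\<Sum>_j 1/(z - X_j)| \<ge> c n/(1 + |z|) uniformly on this region, because m_\<mu> does not vanish
  there; the at most K poles \<xi>_l near supp \<mu> \<union> M_\<mu> change this by O(1/(1 + |z|)).
  Critical points are then the fixed points of z \<mapsto> \<xi>_1 - 1/g_n(z), which is a contraction of
  the disc of radius 2(1 + |\<xi>_1|)/\<lambda> around \<xi>_1, \<lambda> \<approx> c n, since g_n' = O(n/(1 + |z|)^2).
  Banach's fixed point theorem gives existence, uniqueness and the bound; the fixed point is a
  simple critical point because |g_n|^2 dominates |g_n'| there.\<close>


section \<open>Critical points of a product of linear factors\<close>

lemma poly_pderiv_linear_mult:
  fixes p :: "complex poly"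
  shows "poly (pderiv ([:- c, 1:] * p)) z = poly p z + (z - c) * poly (pderiv p) z"
  by (simp only: pderiv_mult poly_add poly_mult) (simp add: pderiv_pCons)

lemma poly_pderiv_prod_linear:
  fixes a :: "'b \<Rightarrow> complex"
  assumes "finite I" "z \<notin> a ` I"
  shows "poly (pderiv (\<Prod>i\<in>I. [:- a i, 1:])) z
           = poly (\<Prod>i\<in>I. [:- a i, 1:]) z * (\<Sum>i\<in>I. 1 / (z - a i))"
  using assms
proof (induction I rule: finite_induct)
  case empty
  then show ?case by simp
next
  case (insert x F)
  let ?P = "\<Prod>i\<in>F. [:- a i, 1:]"
  have "z - a x \<noteq> 0" using insert by auto
  have "poly (pderiv (\<Prod>i\<in>insert x F. [:- a i, 1:])) z
          = poly ?P z + (z - a x) * poly (pderiv ?P) z"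
    by (simp only: prod.insert[OF insert(1,2)] poly_pderiv_linear_mult)
  also have "\<dots> = (z - a x) * poly ?P z * (1 / (z - a x) + (\<Sum>i\<in>F. 1 / (z - a i)))"
    using insert \<open>z - a x \<noteq> 0\<close> by (simp add: field_simps)
  also have "\<dots> = poly (\<Prod>i\<in>insert x F. [:- a i, 1:]) z * (\<Sum>i\<in>insert x F. 1 / (z - a i))"
    using insert by (simp add: algebra_simps)
  finally show ?case .
qed

lemma poly_pderiv_linear_times_prod:
  fixes a :: "'b \<Rightarrow> complex"
  assumes "finite I" "z \<notin> a ` I"
  shows "poly (pderiv ([:- \<xi>, 1:] * (\<Prod>i\<in>I. [:- a i, 1:]))) z
           = poly (\<Prod>i\<in>I. [:- a i, 1:]) z * (1 + (z - \<xi>) * (\<Sum>i\<in>I. 1 / (z - a i)))"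
  unfolding poly_pderiv_linear_mult poly_pderiv_prod_linear[OF assms]
  by (simp add: algebra_simps)

lemma poly_prod_linear_eq_0_iff:
  fixes a :: "'b \<Rightarrow> complex"
  assumes "finite I"
  shows "poly (\<Prod>i\<in>I. [:- a i, 1:]) z = 0 \<longleftrightarrow> z \<in> a ` I"
  using assms by (auto simp: poly_prod)

lemma has_field_derivative_sum_inverse:
  fixes a :: "'b \<Rightarrow> complex"
  assumes "finite I" "w \<notin> a ` I"
  shows "((\<lambda>z. \<Sum>i\<in>I. 1 / (z - a i)) has_field_derivative - (\<Sum>i\<in>I. 1 / (w - a i)^2)) (at w)"
proof -
  have "((\<lambda>z. 1 / (z - a i)) has_field_derivative - (1 / (w - a i)^2)) (at w)" if "i \<in> I" for i
    using that assms by (auto intro!: derivative_eq_intros simp: power2_eq_square field_simps)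
  then show ?thesis
    by (auto intro!: DERIV_sum simp: sum_negf[symmetric])
qed

text \<open>At a zero w of the logarithmic derivative 1/(z - \<xi>) + g(z), the second derivative of
  the polynomial is a nonzero multiple of g(w)^2 - g'(w).\<close>
lemma order_pderiv_linear_times_prod_eq_1:
  fixes a :: "'b \<Rightarrow> complex" and I :: "'b set"
  defines "q \<equiv> \<Prod>i\<in>I. [:- a i, 1:]" and "g \<equiv> \<lambda>z. \<Sum>i\<in>I. 1 / (z - a i)"
  assumes fin: "finite I" and w: "w \<notin> a ` I" and zero: "1 + (w - \<xi>) * g w = 0"
    and nondeg: "(g w)^2 + (\<Sum>i\<in>I. 1 / (w - a i)^2) \<noteq> 0"
  shows "order w (pderiv ([:- \<xi>, 1:] * q)) = 1"
proof -
  define p' where "p' = pderiv ([:- \<xi>, 1:] * q)"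
  have q': "poly (pderiv q) z = poly q z * g z" if "z \<notin> a ` I" for z
    unfolding q_def g_def using poly_pderiv_prod_linear[OF fin that] .
  have qw: "poly q w \<noteq> 0" and gw: "g w \<noteq> 0"
    using poly_prod_linear_eq_0_iff[OF fin] w zero unfolding q_def by auto
  have "((\<lambda>z. poly q z * g z) has_field_derivative
          poly (pderiv q) w * g w - poly q w * (\<Sum>i\<in>I. 1 / (w - a i)^2)) (at w)"
    unfolding g_def using DERIV_mult[OF poly_DERIV has_field_derivative_sum_inverse[OF fin w]]
    by (simp add: algebra_simps)
  then have dq': "(poly (pderiv q) has_field_derivative
          poly (pderiv q) w * g w - poly q w * (\<Sum>i\<in>I. 1 / (w - a i)^2)) (at w)"
    by (rule has_field_derivative_transform_within_open[of _ _ _ "- (a ` I)"])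
       (use fin w q' in \<open>auto intro: finite_imp_closed\<close>)
  then have q'': "poly (pderiv (pderiv q)) w = poly q w * ((g w)^2 - (\<Sum>i\<in>I. 1 / (w - a i)^2))"
    using DERIV_unique[OF poly_DERIV dq'] q'[OF w] by (simp add: algebra_simps power2_eq_square)
  have wx: "w - \<xi> = - 1 / g w" using zero gw by (auto simp: field_simps add_eq_0_iff)
  have p'': "poly (pderiv p') w = 2 * poly (pderiv q) w + (w - \<xi>) * poly (pderiv (pderiv q)) w"
    unfolding p'_def by (simp only: pderiv_mult pderiv_add) (simp add: pderiv_pCons algebra_simps)
  have "poly (pderiv p') w = poly q w * ((g w)^2 + (\<Sum>i\<in>I. 1 / (w - a i)^2)) / g w"
    unfolding p'' q'' q'[OF w] wx using gw by (simp add: field_simps power2_eq_square)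
  then have "poly (pderiv p') w \<noteq> 0" using qw nondeg gw by simp
  moreover have "poly p' w = 0"
    unfolding p'_def q_def using poly_pderiv_linear_times_prod[OF fin w] zero g_def by simp
  ultimately show ?thesis
    unfolding p'_def[symmetric] using order_pderiv[of p' w] order_root by fastforce
qed

section \<open>Estimates for sums of inverses\<close>

lemma norm_sum_inverse_diff_le:
  fixes a :: "'b \<Rightarrow> complex"
  assumes "d > 0" "d' > 0" "\<forall>i\<in>I. d \<le> cmod (z - a i) \<and> d' \<le> cmod (z' - a i)"
  shows "cmod ((\<Sum>i\<in>I. 1 / (z - a i)) - (\<Sum>i\<in>I. 1 / (z' - a i)))
           \<le> cmod (z - z') * card I / (d * d')"
proof -
  have "cmod ((\<Sum>i\<in>I. 1 / (z - a i)) - (\<Sum>i\<in>I. 1 / (z' - a i)))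
          = cmod (\<Sum>i\<in>I. (z' - z) / ((z - a i) * (z' - a i)))"
  proof -
    have "1 / (z - a i) - 1 / (z' - a i) = (z' - z) / ((z - a i) * (z' - a i))" if "i \<in> I" for i
    proof -
      have "0 < cmod (z - a i)" "0 < cmod (z' - a i)"
        using assms(1,2) assms(3)[rule_format, OF that] by linarith+
      then show ?thesis by (simp add: field_simps)
    qed
    then show ?thesis by (simp add: sum_subtractf[symmetric])
  qed
  also have "\<dots> \<le> (\<Sum>i\<in>I. cmod (z - z') / (d * d'))"
  proof (rule order_trans[OF norm_sum sum_mono])
    fix i assume "i \<in> I"
    then have "d \<le> cmod (z - a i)" "d' \<le> cmod (z' - a i)" using assms(3) by auto
    then show "cmod ((z' - z) / ((z - a i) * (z' - a i))) \<le> cmod (z - z') / (d * d')"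
      using assms(1,2) by (simp add: norm_divide norm_mult norm_minus_commute)
        (intro divide_left_mono mult_mono mult_pos_pos, auto)
  qed
  finally show ?thesis by (simp add: mult.commute)
qed

lemma norm_sum_inverse_square_le:
  fixes a :: "'b \<Rightarrow> complex"
  assumes "d > 0" "\<forall>i\<in>I. d \<le> cmod (z - a i)"
  shows "cmod (\<Sum>i\<in>I. 1 / (z - a i)^2) \<le> card I / d^2"
proof -
  have "cmod (\<Sum>i\<in>I. 1 / (z - a i)^2) \<le> (\<Sum>i\<in>I. 1 / d^2)"
  proof (rule order_trans[OF norm_sum sum_mono])
    fix i assume "i \<in> I"
    then have "d \<le> cmod (z - a i)" using assms by blast
    then show "cmod (1 / (z - a i)^2) \<le> 1 / d^2"
      using assms by (simp add: norm_divide norm_power)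
        (intro divide_left_mono power_mono mult_pos_pos, auto)
  qed
  then show ?thesis by simp
qed

lemma norm_sum_inverse_diff_le_weighted:
  fixes a :: "'b \<Rightarrow> complex" and \<kappa> lam :: real
  assumes \<kappa>: "\<kappa> > 0" and card: "2 * card I \<le> \<kappa>^2 * lam^2"
    and sep: "\<forall>i\<in>I. \<kappa> * (1 + cmod x) \<le> cmod (x - a i) \<and> \<kappa> * (1 + cmod y) \<le> cmod (y - a i)"
  shows "cmod ((\<Sum>i\<in>I. 1 / (x - a i)) - (\<Sum>i\<in>I. 1 / (y - a i)))
           \<le> cmod (x - y) * lam^2 / (2 * (1 + cmod x) * (1 + cmod y))"
proof -
  have W: "1 + cmod z > 0" for z :: complex by (simp add: add_pos_nonneg)
  have "cmod ((\<Sum>i\<in>I. 1 / (x - a i)) - (\<Sum>i\<in>I. 1 / (y - a i)))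
          \<le> cmod (x - y) * card I / ((\<kappa> * (1 + cmod x)) * (\<kappa> * (1 + cmod y)))"
    using sep \<kappa> W by (intro norm_sum_inverse_diff_le) auto
  also have "\<dots> \<le> cmod (x - y) * (\<kappa>^2 * lam^2 / 2) / ((\<kappa> * (1 + cmod x)) * (\<kappa> * (1 + cmod y)))"
    using card \<kappa> W by (intro divide_right_mono mult_left_mono) auto
  also have "\<dots> = cmod (x - y) * lam^2 / (2 * (1 + cmod x) * (1 + cmod y))"
  proof -
    have "c * (\<kappa>^2 * lam^2 / 2) / ((\<kappa> * s) * (\<kappa> * t)) = c * lam^2 / (2 * s * t)"
      if "0 < s" "0 < t" for c s t
      using that \<kappa> by (simp add: field_simps power2_eq_square)
    from this[OF W W] show ?thesis .
  qed
  finally show ?thesis .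
qed

lemma square_sum_inverse_plus_sum_inverse_square_nonzero:
  fixes a :: "'b \<Rightarrow> complex" and \<kappa> lam :: real
  assumes \<kappa>: "\<kappa> > 0" and lam: "lam > 0" and card: "2 * card I \<le> \<kappa>^2 * lam^2"
    and sep: "\<forall>i\<in>I. \<kappa> * (1 + cmod w) \<le> cmod (w - a i)"
    and lower: "lam / (1 + cmod w) \<le> cmod (\<Sum>i\<in>I. 1 / (w - a i))"
  shows "(\<Sum>i\<in>I. 1 / (w - a i))^2 + (\<Sum>i\<in>I. 1 / (w - a i)^2) \<noteq> 0"
proof
  assume sum0: "(\<Sum>i\<in>I. 1 / (w - a i))^2 + (\<Sum>i\<in>I. 1 / (w - a i)^2) = 0"
  have W: "1 + cmod w > 0" by (simp add: add_pos_nonneg)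
  have "(lam / (1 + cmod w))^2 \<le> cmod (\<Sum>i\<in>I. 1 / (w - a i))^2"
    using lower lam W by (intro power_mono) auto
  also have "\<dots> = cmod (\<Sum>i\<in>I. 1 / (w - a i)^2)"
    using sum0 by (metis add_eq_0_iff norm_minus_cancel norm_power)
  also have "\<dots> \<le> card I / (\<kappa> * (1 + cmod w))^2"
    using sep \<kappa> W by (intro norm_sum_inverse_square_le) auto
  also have "\<dots> = (card I / \<kappa>^2) / (1 + cmod w)^2"
    by (simp add: power_mult_distrib)
  also have "\<dots> < lam^2 / (1 + cmod w)^2"
  proof (rule divide_strict_right_mono)
    have "0 < \<kappa>^2 * lam^2" using \<kappa> lam by simp
    then show "card I / \<kappa>^2 < lam^2" using card \<kappa> by (simp add: divide_less_eq mult.commute)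
  qed (use W in simp)
  finally show False by (simp add: power_divide)
qed

lemma norm_sum_inverse_ge_near_centre:
  fixes x :: "'b \<Rightarrow> complex" and m :: complex
  assumes "\<delta> > 0" and far: "\<forall>j\<in>J. \<delta> \<le> dist z (x j) \<and> \<delta> \<le> dist z0 (x j)"
    and near: "dist z0 z < cmod m * \<delta>^2 / 4"
    and centre: "cmod ((\<Sum>j\<in>J. 1 / (z0 - x j)) - card J * m) < card J * (cmod m / 4)"
  shows "card J * (cmod m / 2) \<le> cmod (\<Sum>j\<in>J. 1 / (z - x j))"
proof -
  have "cmod ((\<Sum>j\<in>J. 1 / (z - x j)) - (\<Sum>j\<in>J. 1 / (z0 - x j))) \<le> cmod (z - z0) * card J / (\<delta> * \<delta>)"
    using far \<open>\<delta> > 0\<close> by (intro norm_sum_inverse_diff_le) (auto simp: dist_norm)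
  also have "\<dots> \<le> cmod m * \<delta>^2 / 4 * card J / (\<delta> * \<delta>)"
    using near \<open>\<delta> > 0\<close>
    by (intro divide_right_mono mult_right_mono) (auto simp: dist_norm norm_minus_commute)
  also have "\<dots> = card J * (cmod m / 4)"
    using \<open>\<delta> > 0\<close> by (simp add: power2_eq_square)
  finally show ?thesis
    using centre norm_triangle_ineq2[of "card J * m" "\<Sum>j\<in>J. 1 / (z0 - x j)"]
      norm_triangle_ineq2[of "\<Sum>j\<in>J. 1 / (z0 - x j)" "\<Sum>j\<in>J. 1 / (z - x j)"]
    by (simp add: norm_mult norm_minus_commute)
qed

lemma norm_sum_inverse_ge_on_cover:
  fixes x :: "'b \<Rightarrow> complex" and m :: "complex \<Rightarrow> complex" and c :: real
  assumes "\<delta> > 0" and cover: "V \<subseteq> (\<Union>z\<in>F. ball z (cmod (m z) * \<delta>^2 / 4))" "F \<subseteq> V"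
    and far: "\<forall>z\<in>V. \<forall>j\<in>J. \<delta> \<le> dist z (x j)"
    and centre: "\<forall>z\<in>F. cmod ((\<Sum>j\<in>J. 1 / (z - x j)) - card J * m z) < card J * (cmod (m z) / 4)"
    and c: "\<forall>z\<in>F. c \<le> cmod (m z) / 2"
  shows "\<forall>z\<in>V. c * card J \<le> cmod (\<Sum>j\<in>J. 1 / (z - x j))"
proof
  fix z assume "z \<in> V"
  then obtain z0 where z0: "z0 \<in> F" "dist z0 z < cmod (m z0) * \<delta>^2 / 4" using cover(1) by auto
  then have "card J * (cmod (m z0) / 2) \<le> cmod (\<Sum>j\<in>J. 1 / (z - x j))"
    using far \<open>z \<in> V\<close> cover(2) centre by (intro norm_sum_inverse_ge_near_centre[OF \<open>\<delta> > 0\<close>]) auto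
  moreover have "c * card J \<le> card J * (cmod (m z0) / 2)"
    using mult_right_mono[of c "cmod (m z0) / 2" "card J"] c z0(1) by (simp add: mult.commute)
  ultimately show "c * card J \<le> cmod (\<Sum>j\<in>J. 1 / (z - x j))" by linarith
qed

lemma norm_sum_inverse_ge_far:
  fixes x :: "'b \<Rightarrow> complex"
  assumes x: "\<forall>j\<in>J. cmod (x j) \<le> B" and z: "3 * B + 1 \<le> cmod z"
  shows "card J / (2 * cmod z) \<le> cmod (\<Sum>j\<in>J. 1 / (z - x j))"
proof -
  have zpos: "cmod z > 0" and nz: "z - x j \<noteq> 0" and small: "cmod (x j / (z - x j)) \<le> 1/2"
    if "j \<in> J" for j
  proof -
    have "0 \<le> cmod (x j)" "cmod (x j) \<le> B" using x that by auto
    moreover have "cmod z - cmod (x j) \<le> cmod (z - x j)" by (rule norm_triangle_ineq2)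
    ultimately have "2 * cmod (x j) \<le> cmod (z - x j)" "cmod (z - x j) > 0" using z by linarith+
    then show "cmod (x j / (z - x j)) \<le> 1/2" "z - x j \<noteq> 0" by (auto simp: norm_divide divide_le_eq)
    show "cmod z > 0" using z \<open>0 \<le> cmod (x j)\<close> \<open>cmod (x j) \<le> B\<close> by linarith
  qed
  show ?thesis
  proof (cases "J = {}")
    case False
    then obtain j0 where "j0 \<in> J" by blast
    have "z * (\<Sum>j\<in>J. 1 / (z - x j)) = of_nat (card J) + (\<Sum>j\<in>J. x j / (z - x j))"
      unfolding sum_distrib_left
    proof (subst sum.cong[OF refl])
      show "z * (1 / (z - x j)) = 1 + x j / (z - x j)" if "j \<in> J" for j
        using nz[OF that] by (simp add: field_simps)
    qed (simp add: sum.distrib)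
    moreover have "cmod (\<Sum>j\<in>J. x j / (z - x j)) \<le> card J / 2"
      using order_trans[OF norm_sum sum_mono[OF small]] by simp
    ultimately have "card J / 2 \<le> cmod z * cmod (\<Sum>j\<in>J. 1 / (z - x j))"
      using norm_diff_ineq[of "of_nat (card J) :: complex" "\<Sum>j\<in>J. x j / (z - x j)"]
      by (simp add: norm_mult[symmetric])
    then show ?thesis using zpos[OF \<open>j0 \<in> J\<close>] by (simp add: divide_le_eq mult.commute)
  qed simp
qed

lemma norm_sum_inverse_ge_weighted:
  fixes x :: "'b \<Rightarrow> complex" and c c' B :: real
  assumes x: "\<forall>j\<in>J. cmod (x j) \<le> B" and "B > 0" "0 < c" "c \<le> c'" "c \<le> 1/2"
    and near: "cmod z \<le> 3 * B + 1 \<Longrightarrow> c' * card J \<le> cmod (\<Sum>j\<in>J. 1 / (z - x j))"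
  shows "c * card J / (1 + cmod z) \<le> cmod (\<Sum>j\<in>J. 1 / (z - x j))"
proof (cases "cmod z \<le> 3 * B + 1")
  case True
  have "c * card J / (1 + cmod z) \<le> c * card J"
    using divide_left_mono[of 1 "1 + cmod z" "c * card J"] \<open>0 < c\<close> by (simp add: add_pos_nonneg)
  also have "\<dots> \<le> c' * card J" using \<open>c \<le> c'\<close> by (simp add: mult_right_mono)
  finally show ?thesis using near[OF True] by linarith
next
  case False
  then have "cmod z > 0" using \<open>B > 0\<close> by linarith
  have "c * card J / (1 + cmod z) \<le> (1/2) * card J / cmod z"
    using \<open>cmod z > 0\<close> \<open>0 < c\<close> \<open>c \<le> 1/2\<close> by (intro frac_le mult_right_mono) auto
  also have "\<dots> \<le> cmod (\<Sum>j\<in>J. 1 / (z - x j))"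
    using norm_sum_inverse_ge_far[OF x] False by simp
  finally show ?thesis .
qed

lemma norm_sum_Plus_inverse_ge:
  fixes x y :: "'b \<Rightarrow> complex"
  assumes "finite J" "finite L" "d > 0" "\<forall>l\<in>L. d \<le> cmod (z - y l)"
  shows "cmod (\<Sum>j\<in>J. 1 / (z - x j)) - card L / d
           \<le> cmod (\<Sum>i\<in>J <+> L. 1 / (z - case_sum x y i))"
proof -
  have "cmod (\<Sum>l\<in>L. 1 / (z - y l)) \<le> (\<Sum>l\<in>L. 1 / d)"
  proof (rule order_trans[OF norm_sum sum_mono])
    fix l assume "l \<in> L"
    then show "cmod (1 / (z - y l)) \<le> 1 / d"
      using assms(3,4) by (simp add: norm_divide frac_le)
  qed
  then show ?thesis
    using norm_diff_ineq[of "\<Sum>j\<in>J. 1 / (z - x j)" "\<Sum>l\<in>L. 1 / (z - y l)"] assms(1,2)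
    by (simp add: sum.Plus comp_def)
qed

section \<open>A unique zero by contraction\<close>

lemma inverse_norm_le_of_lower_bound:
  fixes w :: complex
  assumes "lam > 0" and "lam / (1 + cmod z) \<le> cmod w"
  shows "w \<noteq> 0" and "1 / cmod w \<le> (1 + cmod z) / lam"
proof -
  have W: "1 + cmod z > 0" by (simp add: add_pos_nonneg)
  then have "0 < cmod w" using assms by (smt (verit) divide_pos_pos)
  moreover have "lam \<le> cmod w * (1 + cmod z)" using assms(2) W by (simp add: divide_le_eq)
  ultimately show "w \<noteq> 0" "1 / cmod w \<le> (1 + cmod z) / lam"
    using assms(1) by (auto simp: divide_le_eq le_divide_eq mult.commute)
qed

lemma zero_one_plus_mult_near:
  fixes g :: "complex \<Rightarrow> complex"
  assumes lam: "lam \<ge> 2" and lower: "lam / (1 + cmod z) \<le> cmod (g z)"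
    and zero: "1 + (z - \<xi>) * g z = 0"
  shows "cmod (z - \<xi>) \<le> 2 * (1 + cmod \<xi>) / lam"
proof -
  note inv = inverse_norm_le_of_lower_bound[OF _ lower]
  have "z - \<xi> = - 1 / g z" using zero inv(1) lam by (auto simp: field_simps add_eq_0_iff)
  then have "cmod (z - \<xi>) \<le> (1 + cmod z) / lam"
    using inv(2) lam by (simp add: norm_divide)
  then have "cmod (z - \<xi>) * lam \<le> 1 + cmod z"
    using lam by (simp add: le_divide_eq)
  also have "\<dots> \<le> 1 + cmod \<xi> + cmod (z - \<xi>)"
    using norm_triangle_ineq2[of z \<xi>] by linarith
  finally have "cmod (z - \<xi>) * (lam - 1) \<le> 1 + cmod \<xi>"
    by (simp add: algebra_simps)
  moreover have "cmod (z - \<xi>) * lam \<le> 2 * (cmod (z - \<xi>) * (lam - 1))"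
    using lam mult_right_mono[OF lam norm_ge_zero[of "z - \<xi>"]] by (simp add: algebra_simps)
  ultimately show ?thesis
    using lam by (simp add: field_simps)
qed

lemma dist_minus_inverse_le:
  fixes w :: complex
  assumes lam: "lam \<ge> 2" and z: "dist \<xi> z \<le> 2 * (1 + cmod \<xi>) / lam"
    and lower: "lam / (1 + cmod z) \<le> cmod w"
  shows "dist \<xi> (\<xi> - 1 / w) \<le> 2 * (1 + cmod \<xi>) / lam"
proof -
  have "(1 + cmod \<xi>) * 2 \<le> (1 + cmod \<xi>) * lam" using lam by (intro mult_left_mono) auto
  then have r: "2 * (1 + cmod \<xi>) / lam \<le> 1 + cmod \<xi>"
    using lam by (simp add: divide_le_eq mult.commute)
  have "dist \<xi> (\<xi> - 1 / w) = 1 / cmod w" by (simp add: norm_divide)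
  also have "\<dots> \<le> (1 + cmod z) / lam" using inverse_norm_le_of_lower_bound(2)[OF _ lower] lam by simp
  also have "\<dots> \<le> (1 + cmod \<xi> + 2 * (1 + cmod \<xi>) / lam) / lam"
    using z norm_triangle_ineq2[of z \<xi>] lam
    by (intro divide_right_mono) (auto simp: dist_norm norm_minus_commute)
  also have "\<dots> \<le> 2 * (1 + cmod \<xi>) / lam"
    using r lam by (intro divide_right_mono) auto
  finally show ?thesis .
qed

lemma dist_inverse_le_half:
  fixes g :: "complex \<Rightarrow> complex"
  assumes lam: "lam > 0"
    and lower: "lam / (1 + cmod x) \<le> cmod (g x)" "lam / (1 + cmod y) \<le> cmod (g y)"
    and lip: "cmod (g x - g y) \<le> cmod (x - y) * lam^2 / (2 * (1 + cmod x) * (1 + cmod y))"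
  shows "dist (1 / g x) (1 / g y) \<le> 1/2 * dist x y"
proof -
  have W: "1 + cmod z > 0" for z :: complex by (simp add: add_pos_nonneg)
  note inv_x = inverse_norm_le_of_lower_bound[OF lam lower(1)]
    and inv_y = inverse_norm_le_of_lower_bound[OF lam lower(2)]
  have "dist (1 / g x) (1 / g y) = cmod (g x - g y) * (1 / cmod (g x)) * (1 / cmod (g y))"
    using inv_x(1) inv_y(1) unfolding dist_norm
    by (simp add: norm_divide norm_mult field_simps norm_minus_commute)
  also have "\<dots> \<le> cmod (x - y) * lam^2 / (2 * (1 + cmod x) * (1 + cmod y))
                    * ((1 + cmod x) / lam) * ((1 + cmod y) / lam)"
    using lip inv_x(2) inv_y(2) W[of x] W[of y] lam
    by (intro mult_mono mult_nonneg_nonneg divide_nonneg_nonneg) auto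
  also have "\<dots> = 1/2 * dist x y"
  proof -
    have "a * lam^2 / (2 * s * t) * (s / lam) * (t / lam) = 1/2 * a" if "0 < s" "0 < t" for a s t
      using that lam by (simp add: field_simps power2_eq_square)
    from this[OF W W] show ?thesis by (simp add: dist_norm)
  qed
  finally show ?thesis .
qed

text \<open>The zeros of 1 + (z - \<xi>) g(z) are the fixed points of the contraction z \<mapsto> \<xi> - 1/g(z)
  of the disc cball \<xi> r.\<close>
lemma unique_zero_one_plus_mult:
  fixes g :: "complex \<Rightarrow> complex" and U :: "complex set" and \<xi> :: complex and lam :: real
  defines "r \<equiv> 2 * (1 + cmod \<xi>) / lam"
  assumes lam: "lam \<ge> 2"
    and lower: "\<forall>z\<in>U. lam / (1 + cmod z) \<le> cmod (g z)"
    and lip: "\<forall>x\<in>U. \<forall>y\<in>U.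
                cmod (g x - g y) \<le> cmod (x - y) * lam^2 / (2 * (1 + cmod x) * (1 + cmod y))"
    and ball: "cball \<xi> r \<subseteq> U"
  shows "\<exists>w. {z\<in>U. 1 + (z - \<xi>) * g z = 0} = {w} \<and> cmod (w - \<xi>) \<le> r"
proof -
  define T where "T z = \<xi> - 1 / g z" for z
  have fixed_iff: "T z = z \<longleftrightarrow> 1 + (z - \<xi>) * g z = 0" if "z \<in> U" for z
    using inverse_norm_le_of_lower_bound(1)[of lam z "g z"] lower that lam
    unfolding T_def by (auto simp: field_simps)
  have "T ` cball \<xi> r \<subseteq> cball \<xi> r"
    using dist_minus_inverse_le[OF lam] lower ball by (force simp: T_def r_def)
  moreover have "dist (T x) (T y) \<le> 1/2 * dist x y" if "x \<in> cball \<xi> r" "y \<in> cball \<xi> r" for x y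
  proof -
    have "x \<in> U" "y \<in> U" using that ball by auto
    then have "dist (1 / g y) (1 / g x) \<le> 1/2 * dist y x"
      using lower lip lam by (intro dist_inverse_le_half) auto
    then show ?thesis by (simp add: T_def dist_norm norm_minus_commute)
  qed
  moreover have "0 \<le> r" using lam by (simp add: r_def add_pos_nonneg)
  ultimately have "\<exists>!w\<in>cball \<xi> r. T w = w"
    by (intro Banach_fix[of "cball \<xi> r" "1/2" T]) (auto simp: complete_eq_closed)
  then obtain w where w: "w \<in> cball \<xi> r" "T w = w"
    and unique: "\<And>z. z \<in> cball \<xi> r \<Longrightarrow> T z = z \<Longrightarrow> z = w"
    by blast
  have "{z\<in>U. 1 + (z - \<xi>) * g z = 0} = {w}"
  proof safe
    fix z assume "z \<in> U" "1 + (z - \<xi>) * g z = 0"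
    moreover from this have "z \<in> cball \<xi> r"
      using zero_one_plus_mult_near[OF lam, of z g \<xi>] lower
      by (simp add: r_def dist_norm norm_minus_commute)
    ultimately show "z = w" using unique fixed_iff by blast
  qed (use w ball fixed_iff in auto)
  with w(1) show ?thesis by (auto simp: dist_norm norm_minus_commute)
qed

lemma unique_simple_critical_point:
  fixes a :: "'b \<Rightarrow> complex" and I :: "'b set" and U :: "complex set" and \<xi> :: complex
    and \<kappa> lam :: real
  defines "g \<equiv> \<lambda>z. \<Sum>i\<in>I. 1 / (z - a i)" and "p \<equiv> [:- \<xi>, 1:] * (\<Prod>i\<in>I. [:- a i, 1:])"
  assumes fin: "finite I" and \<kappa>: "\<kappa> > 0" and lam: "lam \<ge> 2"
    and sep: "\<forall>z\<in>U. \<forall>i\<in>I. \<kappa> * (1 + cmod z) \<le> cmod (z - a i)"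
    and lower: "\<forall>z\<in>U. lam / (1 + cmod z) \<le> cmod (g z)"
    and ball: "cball \<xi> (2 * (1 + cmod \<xi>) / lam) \<subseteq> U"
    and card: "2 * card I \<le> \<kappa>^2 * lam^2"
  shows "\<exists>w. {z\<in>U. poly (pderiv p) z = 0} = {w} \<and> order w (pderiv p) = 1
             \<and> cmod (w - \<xi>) \<le> 2 * (1 + cmod \<xi>) / lam"
proof -
  have no_pole: "z \<notin> a ` I" if "z \<in> U" for z
  proof
    assume "z \<in> a ` I"
    then obtain i where "i \<in> I" "z = a i" by blast
    moreover have "0 < \<kappa> * (1 + cmod z)" using \<kappa> by (simp add: add_pos_nonneg)
    ultimately show False using sep that by fastforce
  qed
  have "\<forall>x\<in>U. \<forall>y\<in>U. cmod (g x - g y) \<le> cmod (x - y) * lam^2 / (2 * (1 + cmod x) * (1 + cmod y))"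
    unfolding g_def using sep by (intro ballI norm_sum_inverse_diff_le_weighted[OF \<kappa> card]) auto
  then obtain w where w: "{z\<in>U. 1 + (z - \<xi>) * g z = 0} = {w}"
      "cmod (w - \<xi>) \<le> 2 * (1 + cmod \<xi>) / lam"
    using unique_zero_one_plus_mult[OF lam lower _ ball] by blast
  have crit_iff: "poly (pderiv p) z = 0 \<longleftrightarrow> 1 + (z - \<xi>) * g z = 0" if "z \<in> U" for z
    unfolding p_def g_def poly_pderiv_linear_times_prod[OF fin no_pole[OF that]]
    using poly_prod_linear_eq_0_iff[OF fin, of a z] no_pole[OF that] by simp
  have "w \<in> U" "1 + (w - \<xi>) * g w = 0" using w(1) by auto
  moreover have "(g w)^2 + (\<Sum>i\<in>I. 1 / (w - a i)^2) \<noteq> 0"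
    using sep lower \<open>w \<in> U\<close> lam unfolding g_def
    by (intro square_sum_inverse_plus_sum_inverse_square_nonzero[OF \<kappa> _ card]) auto
  ultimately have "order w (pderiv p) = 1"
    using no_pole order_pderiv_linear_times_prod_eq_1[OF fin, of w a \<xi>]
    unfolding p_def g_def by blast
  with w crit_iff show ?thesis by auto
qed

section \<open>The deterministic estimate\<close>

lemma norm_bound_nonneg:
  fixes A :: "'a::real_normed_vector set"
  assumes "A \<noteq> {}" "\<forall>a\<in>A. norm a \<le> B"
  shows "0 \<le> B"
  using assms norm_ge_zero order_trans by blast

lemma scaled_one_plus_norm_le:
  fixes \<epsilon> B t :: real
  assumes "\<epsilon> > 0" "B \<ge> 0" "\<epsilon> \<le> t" "cmod z - B \<le> t"
  shows "\<epsilon> / (1 + B + \<epsilon>) * (1 + cmod z) \<le> t"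
proof -
  have "\<epsilon> * (1 + cmod z) \<le> t * (1 + B + \<epsilon>)"
  proof (cases "cmod z \<le> B + \<epsilon>")
    case True
    then have "\<epsilon> * (1 + cmod z) \<le> \<epsilon> * (1 + B + \<epsilon>)" using assms by (intro mult_left_mono) auto
    also have "\<dots> \<le> t * (1 + B + \<epsilon>)" using assms by (intro mult_right_mono) auto
    finally show ?thesis .
  next
    case False
    have "(cmod z - B) * (1 + B + \<epsilon>) - \<epsilon> * (1 + cmod z) = (cmod z - B - \<epsilon>) * (1 + B)"
      by (simp add: algebra_simps)
    also have "\<dots> \<ge> 0" using False assms by auto
    finally have "\<epsilon> * (1 + cmod z) \<le> (cmod z - B) * (1 + B + \<epsilon>)" by simp
    also have "\<dots> \<le> t * (1 + B + \<epsilon>)" using assms by (intro mult_right_mono) auto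
    finally show ?thesis .
  qed
  then show ?thesis using assms by (simp add: divide_le_eq mult.commute)
qed

lemma norm_le_infdist_plus:
  fixes A :: "complex set"
  assumes "A \<noteq> {}" "\<forall>a\<in>A. cmod a \<le> B"
  shows "cmod x \<le> infdist x A + B"
proof -
  have "cmod x - B \<le> dist x a" if "a \<in> A" for a
    using assms(2) that norm_triangle_ineq2[of x a] by (force simp: dist_norm)
  then have "cmod x - B \<le> infdist x A"
    unfolding infdist_notempty[OF assms(1)] by (intro cINF_greatest[OF assms(1)])
  then show ?thesis by simp
qed

lemma pole_separation:
  fixes A :: "complex set" and \<epsilon> BA :: real
  defines "\<kappa> \<equiv> \<epsilon> / (1 + BA + 3 * \<epsilon>)"
  assumes "\<epsilon> > 0" "A \<noteq> {}" "\<forall>a\<in>A. cmod a \<le> BA"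
    and z: "2 * \<epsilon> \<le> infdist z A" and p: "infdist p A < \<epsilon>"
  shows "\<kappa> * (1 + cmod z) \<le> cmod (z - p)"
proof -
  have "BA \<ge> 0" using norm_bound_nonneg[OF assms(3,4)] .
  have "infdist z A \<le> infdist p A + cmod (z - p)"
    using infdist_triangle[of z A p] by (simp add: dist_norm)
  moreover have "cmod p \<le> BA + \<epsilon>"
    using p norm_le_infdist_plus[OF assms(3,4), of p] by linarith
  ultimately have "\<epsilon> / (1 + (BA + 2 * \<epsilon>) + \<epsilon>) * (1 + cmod z) \<le> cmod (z - p)"
    using z p norm_triangle_ineq2[of z p] \<open>\<epsilon> > 0\<close> \<open>BA \<ge> 0\<close>
    by (intro scaled_one_plus_norm_le) auto
  then show ?thesis by (simp add: \<kappa>_def algebra_simps)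
qed

lemma cball_subset_infdist_ge:
  fixes A :: "complex set" and \<epsilon> BA :: real
  defines "\<kappa> \<equiv> \<epsilon> / (1 + BA + 3 * \<epsilon>)"
  assumes "\<epsilon> > 0" "A \<noteq> {}" "\<forall>a\<in>A. cmod a \<le> BA"
    and \<xi>: "3 * \<epsilon> \<le> infdist \<xi> A" and r: "r \<le> \<kappa> * (1 + cmod \<xi>)"
  shows "cball \<xi> r \<subseteq> {z. 2 * \<epsilon> \<le> infdist z A}"
proof
  fix z assume z: "z \<in> cball \<xi> r"
  have "BA \<ge> 0" using norm_bound_nonneg[OF assms(3,4)] .
  have "\<epsilon> / (1 + (BA + 2 * \<epsilon>) + \<epsilon>) * (1 + cmod \<xi>) \<le> infdist \<xi> A - 2 * \<epsilon>"
    using \<xi> norm_le_infdist_plus[OF assms(3,4), of \<xi>] \<open>\<epsilon> > 0\<close> \<open>BA \<ge> 0\<close>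
    by (intro scaled_one_plus_norm_le) auto
  then have "dist \<xi> z \<le> infdist \<xi> A - 2 * \<epsilon>"
    using z r by (simp add: \<kappa>_def algebra_simps)
  moreover have "infdist \<xi> A \<le> infdist z A + dist \<xi> z" by (rule infdist_triangle)
  ultimately show "z \<in> {z. 2 * \<epsilon> \<le> infdist z A}" by simp
qed

lemma pn_eq_linear_times_prod:
  assumes "1 \<le> k"
  shows "pn x k xi n = [:- xi 1, 1:] * (\<Prod>i\<in>{1..n - k} <+> {2..k}. [:- case_sum x xi i, 1:])"
proof -
  have "{1..k} = insert 1 {2..k}" using assms by auto
  then have "(\<Prod>l\<in>{1..k}. [:- xi l, 1:]) = [:- xi 1, 1:] * (\<Prod>l\<in>{2..k}. [:- xi l, 1:])"
    by simp
  moreover have "(\<Prod>i\<in>{1..n - k} <+> {2..k}. [:- case_sum x xi i, 1:])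
                   = (\<Prod>j\<in>{1..n - k}. [:- x j, 1:]) * (\<Prod>l\<in>{2..k}. [:- xi l, 1:])"
    by (simp add: prod.Plus comp_def)
  ultimately show ?thesis
    unfolding pn_def by (simp only: mult_ac)
qed

lemma contraction_parameter_bounds:
  fixes \<kappa> c :: real and N K k :: nat
  defines "lam \<equiv> c * N - K / \<kappa>"
  assumes "0 < \<kappa>" "\<kappa> \<le> 1" "0 < c" "1 \<le> k" "k \<le> K" "K \<le> N"
    and large: "4 * K \<le> \<kappa> * c * N" "16 \<le> (\<kappa> * c)^2 * N"
  shows "2 \<le> lam" and "2 / lam \<le> \<kappa>" and "2 * real (N + (k - 1)) \<le> \<kappa>^2 * lam^2"
    and "2 / lam \<le> 8 / c / real (N + k)"
proof -
  have "4 \<le> \<kappa> * c * N" using large(1) assms(5,6) by linarith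
  have lam_ge: "c * N / 2 \<le> lam"
    using large(1) assms(2,4) by (simp add: lam_def field_simps)
  have "\<kappa> * (c * N) \<le> 1 * (c * N)" using assms(3,4) by (intro mult_right_mono) auto
  then show "2 \<le> lam" using lam_ge \<open>4 \<le> \<kappa> * c * N\<close> by simp
  have "\<kappa> * (c * N / 2) \<le> \<kappa> * lam" using lam_ge assms(2) by (intro mult_left_mono) auto
  then have "2 \<le> \<kappa> * lam" using \<open>4 \<le> \<kappa> * c * N\<close> by (simp add: mult_ac)
  then show "2 / lam \<le> \<kappa>" using \<open>2 \<le> lam\<close> by (simp add: divide_le_eq mult.commute)
  have "2 * real (N + (k - 1)) \<le> 4 * real N" using assms(5-7) by simp
  also have "\<dots> \<le> (\<kappa> * c)^2 * N * N / 4"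
    using mult_right_mono[OF large(2), of "real N"] by simp
  also have "\<dots> = \<kappa>^2 * (c * N / 2)^2" by (simp add: power2_eq_square field_simps)
  also have "\<dots> \<le> \<kappa>^2 * lam^2"
    using lam_ge assms(4) by (intro mult_left_mono power_mono) auto
  finally show "2 * real (N + (k - 1)) \<le> \<kappa>^2 * lam^2" .
  have "0 < c * N" using assms(4-7) by simp
  then have "2 / lam \<le> 2 / (c * N / 2)"
    using lam_ge \<open>2 \<le> lam\<close> by (intro divide_left_mono) auto
  also have "\<dots> = 8 / (c * (2 * N))" using assms(4-7) by (simp add: field_simps)
  also have "\<dots> \<le> 8 / (c * (N + k))"
    using assms(4-7) by (intro divide_left_mono mult_left_mono) auto
  finally show "2 / lam \<le> 8 / c / real (N + k)" by simp
qed

text \<open>The poles \<xi>_2, ..., \<xi>_k lower the bound c N on the resolvent sum by at most K/\<kappa>,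
  which leaves \<lambda> = c N - K/\<kappa> for the contraction argument.\<close>
lemma unique_far_critical_point:
  fixes x xi :: "nat \<Rightarrow> complex" and A :: "complex set" and \<epsilon> c BA :: real and N k n K :: nat
  defines "\<kappa> \<equiv> \<epsilon> / (1 + BA + 3 * \<epsilon>)"
  assumes "\<epsilon> > 0" "c > 0" and A: "\<forall>a\<in>A. cmod a \<le> BA" and xA: "\<forall>j\<in>{1..N}. x j \<in> A"
    and lower: "\<forall>z. 2 * \<epsilon> \<le> infdist z A \<longrightarrow>
                  c * real N / (1 + cmod z) \<le> cmod (\<Sum>j\<in>{1..N}. 1 / (z - x j))"
    and k: "1 \<le> k" "k \<le> K" "n = N + k"
    and large: "K \<le> N" "4 * K \<le> \<kappa> * c * N" "16 \<le> (\<kappa> * c)^2 * N"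
    and xi1: "3 * \<epsilon> \<le> infdist (xi 1) A" and xil: "\<forall>l\<in>{2..k}. infdist (xi l) A < \<epsilon>"
  shows "\<exists>w. {z. poly (pderiv (pn x k xi n)) z = 0 \<and> 2 * \<epsilon> \<le> infdist z A} = {w}
           \<and> order w (pderiv (pn x k xi n)) = 1
           \<and> cmod (w - xi 1) \<le> 8 / c / real n * (1 + cmod (xi 1))"
proof -
  define U where "U = {z. 2 * \<epsilon> \<le> infdist z A}"
  define I where "I = {1..N} <+> {2..k}"
  define a where "a = case_sum x xi"
  define lam where "lam = c * N - K / \<kappa>"
  have W: "1 + cmod z > 0" for z :: complex by (simp add: add_pos_nonneg)
  have "A \<noteq> {}" using xi1 \<open>\<epsilon> > 0\<close> by (auto simp: infdist_def)
  then have "BA \<ge> 0" using norm_bound_nonneg A by blast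
  then have "0 < \<kappa>" "\<kappa> \<le> 1" using \<open>\<epsilon> > 0\<close> by (auto simp: \<kappa>_def)
  note bounds = contraction_parameter_bounds[OF this \<open>c > 0\<close> k(1,2) large, folded lam_def]
  have sep: "\<forall>z\<in>U. \<forall>i\<in>I. \<kappa> * (1 + cmod z) \<le> cmod (z - a i)"
  proof (intro ballI)
    fix z i assume "z \<in> U" "i \<in> I"
    moreover have "infdist (a i) A < \<epsilon>"
      using \<open>i \<in> I\<close> xA xil \<open>\<epsilon> > 0\<close> by (auto simp: I_def a_def)
    ultimately show "\<kappa> * (1 + cmod z) \<le> cmod (z - a i)"
      unfolding \<kappa>_def U_def using pole_separation[OF \<open>\<epsilon> > 0\<close> \<open>A \<noteq> {}\<close> A] by blast
  qed
  have lower_U: "\<forall>z\<in>U. lam / (1 + cmod z) \<le> cmod (\<Sum>i\<in>I. 1 / (z - a i))"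
  proof
    fix z assume "z \<in> U"
    have "\<forall>l\<in>{2..k}. \<kappa> * (1 + cmod z) \<le> cmod (z - xi l)"
      using sep \<open>z \<in> U\<close> by (force simp: I_def a_def)
    then have "cmod (\<Sum>j\<in>{1..N}. 1 / (z - x j)) - card {2..k} / (\<kappa> * (1 + cmod z))
            \<le> cmod (\<Sum>i\<in>I. 1 / (z - a i))"
      unfolding I_def a_def using \<open>0 < \<kappa>\<close> W[of z] by (intro norm_sum_Plus_inverse_ge) auto
    moreover have "c * N / (1 + cmod z) \<le> cmod (\<Sum>j\<in>{1..N}. 1 / (z - x j))"
      using lower \<open>z \<in> U\<close> by (simp add: U_def)
    moreover have "card {2..k} / (\<kappa> * (1 + cmod z)) \<le> K / (\<kappa> * (1 + cmod z))"
      using k \<open>0 < \<kappa>\<close> W[of z] by (intro divide_right_mono) auto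
    ultimately show "lam / (1 + cmod z) \<le> cmod (\<Sum>i\<in>I. 1 / (z - a i))"
      using \<open>0 < \<kappa>\<close> W[of z] by (simp add: lam_def diff_divide_distrib)
  qed
  have "2 * (1 + cmod (xi 1)) / lam \<le> \<kappa> * (1 + cmod (xi 1))"
    using mult_right_mono[OF bounds(2) less_imp_le[OF W]] by simp
  then have ball: "cball (xi 1) (2 * (1 + cmod (xi 1)) / lam) \<subseteq> U"
    unfolding U_def \<kappa>_def by (rule cball_subset_infdist_ge[OF \<open>\<epsilon> > 0\<close> \<open>A \<noteq> {}\<close> A xi1])
  have "finite I" "card I = N + (k - 1)" by (simp_all add: I_def card_Plus)
  then obtain w where w: "{z\<in>U. poly (pderiv ([:- xi 1, 1:] * (\<Prod>i\<in>I. [:- a i, 1:]))) z = 0} = {w}"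
      "order w (pderiv ([:- xi 1, 1:] * (\<Prod>i\<in>I. [:- a i, 1:]))) = 1"
      "cmod (w - xi 1) \<le> 2 * (1 + cmod (xi 1)) / lam"
    using unique_simple_critical_point[OF _ \<open>0 < \<kappa>\<close> bounds(1) sep lower_U ball] bounds(3) by auto
  have "2 * (1 + cmod (xi 1)) / lam \<le> 8 / c / real n * (1 + cmod (xi 1))"
    using mult_right_mono[OF bounds(4) less_imp_le[OF W]] k(3) by simp
  moreover have pn: "pn x k xi n = [:- xi 1, 1:] * (\<Prod>i\<in>I. [:- a i, 1:])"
    using pn_eq_linear_times_prod[OF k(1)] k(3) by (simp add: I_def a_def)
  moreover have "{z. poly (pderiv (pn x k xi n)) z = 0 \<and> 2 * \<epsilon> \<le> infdist z A} = {w}"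
    using w(1) unfolding pn U_def by blast
  ultimately show ?thesis using w(2,3) by auto
qed

section \<open>Support and Cauchy--Stieltjes transform\<close>

lemma msupp_complement_null:
  assumes "prob_space \<mu>" and "sets \<mu> = sets borel"
  shows "- msupp \<mu> \<in> null_sets \<mu>"
proof -
  interpret prob_space \<mu> by fact
  define F where "F = {B. open B \<and> measure \<mu> B = 0}"
  have F_sets: "B \<in> sets \<mu>" if "B \<in> F" for B
    using that assms(2) by (simp add: F_def)
  obtain F' where F': "F' \<subseteq> F" "countable F'" "\<Union>F' = \<Union>F"
    using Lindelof[of F] by (metis F_def mem_Collect_eq)
  have "\<Union>F = - msupp \<mu>"
  proof (intro equalityI subsetI)
    fix x assume "x \<in> \<Union>F"
    then obtain B where B: "open B" "measure \<mu> B = 0" "x \<in> B" "B \<in> F" by (auto simp: F_def)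
    then obtain e where "e > 0" "ball x e \<subseteq> B" using open_contains_ball by blast
    then have "measure \<mu> (ball x e) \<le> 0"
      using finite_measure_mono[OF _ F_sets[OF B(4)]] B(2) by metis
    then show "x \<in> - msupp \<mu>" using \<open>e > 0\<close> by (auto simp: msupp_def not_less)
  next
    fix x assume "x \<in> - msupp \<mu>"
    then obtain e where "e > 0" "measure \<mu> (ball x e) \<le> 0" by (auto simp: msupp_def not_less)
    then have "ball x e \<in> F" using measure_nonneg[of \<mu> "ball x e"] by (simp add: F_def)
    then show "x \<in> \<Union>F" using \<open>e > 0\<close> by (meson UnionI centre_in_ball)
  qed
  moreover have "(\<Union>B\<in>F'. B) \<in> null_sets \<mu>"
  proof (rule null_sets_UN'[OF F'(2)])
    fix B assume "B \<in> F'"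
    then show "B \<in> null_sets \<mu>"
      using F'(1) F_sets by (auto simp: F_def emeasure_eq_measure null_sets_def)
  qed
  ultimately show ?thesis using F'(3) by simp
qed

lemma AE_in_msupp:
  assumes "prob_space \<mu>" and "sets \<mu> = sets borel"
  shows "AE x in \<mu>. x \<in> msupp \<mu>"
  by (rule AE_I'[OF msupp_complement_null[OF assms]]) auto

lemma msupp_nonempty:
  assumes "prob_space \<mu>" and "sets \<mu> = sets borel"
  shows "msupp \<mu> \<noteq> {}"
proof
  assume "msupp \<mu> = {}"
  then have "emeasure \<mu> (space \<mu>) = 0"
    using msupp_complement_null[OF assms] sets_eq_imp_space_eq[OF assms(2)]
    by (simp add: null_sets_def)
  then show False using prob_space.emeasure_space_1[OF assms(1)] by simp
qed

lemma norm_inverse_diff_inverse_le: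
  fixes x z :: complex
  assumes "cmod x \<le> B" "2 * B < cmod z"
  shows "cmod (1 / (z - x) - 1 / z) \<le> B / (cmod z * (cmod z - B))"
proof -
  have "B \<ge> 0" using assms(1) norm_ge_zero order_trans by blast
  then have zpos: "cmod z > 0" and d: "cmod z - B \<le> cmod (z - x)" "cmod z - B > 0"
    using norm_triangle_ineq2[of z x] assms by linarith+
  then have "z - x \<noteq> 0" by auto
  then have "1 / (z - x) - 1 / z = x / (z * (z - x))" using zpos by (auto simp: field_simps)
  then have "cmod (1 / (z - x) - 1 / z) = cmod x / (cmod z * cmod (z - x))"
    by (simp add: norm_divide norm_mult)
  also have "\<dots> \<le> B / (cmod z * (cmod z - B))"
    using assms(1) d zpos \<open>B \<ge> 0\<close> by (intro frac_le mult_left_mono mult_pos_pos) auto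
  finally show ?thesis .
qed

text \<open>Far from the support, m_\<mu>(z) is within BS/(|z|(|z| - BS)) < 1/|z| of 1/z.\<close>
lemma cst_nonzero_far:
  assumes "prob_space \<mu>" and "sets \<mu> = sets borel"
    and BS: "\<forall>x\<in>msupp \<mu>. cmod x \<le> BS" and z: "cmod z > 2 * BS"
  shows "cst \<mu> z \<noteq> 0"
proof -
  interpret prob_space \<mu> by fact
  have "BS \<ge> 0" using norm_bound_nonneg[OF msupp_nonempty[OF assms(1,2)] BS] .
  then have zpos: "cmod z > 0" using z by linarith
  define \<beta> where "\<beta> = BS / (cmod z * (cmod z - BS))"
  have bound: "AE x in \<mu>. cmod (1 / (z - x) - 1 / z) \<le> \<beta>"
    using AE_in_msupp[OF assms(1,2)]
    by eventually_elim (use BS z in \<open>auto simp: \<beta>_def intro!: norm_inverse_diff_inverse_le\<close>)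
  have "(\<lambda>x. 1 / (z - x)) \<in> borel_measurable borel" by measurable
  then have meas: "(\<lambda>x. 1 / (z - x)) \<in> borel_measurable \<mu>"
    using measurable_cong_sets[OF assms(2) refl] by blast
  have "AE x in \<mu>. cmod (1 / (z - x)) \<le> \<beta> + cmod (1 / z)"
    using bound by eventually_elim (metis add.commute diff_add_cancel norm_triangle_ineq order_trans
        add_right_mono)
  then have "integrable \<mu> (\<lambda>x. 1 / (z - x))"
    by (rule integrable_const_bound[OF _ meas])
  then have int: "integrable \<mu> (\<lambda>x. 1 / (z - x) - 1 / z)"
    and "cst \<mu> z - 1 / z = integral\<^sup>L \<mu> (\<lambda>x. 1 / (z - x) - 1 / z)"
    unfolding cst_def by (simp_all add: prob_space)
  then have "cmod (cst \<mu> z - 1 / z) \<le> integral\<^sup>L \<mu> (\<lambda>x. cmod (1 / (z - x) - 1 / z))"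
    by (simp add: integral_norm_bound)
  also have "\<dots> \<le> \<beta>" using int bound by (intro integral_le_const) auto
  also have "\<beta> < 1 / cmod z"
  proof -
    have "BS / (cmod z - BS) < 1" using z \<open>BS \<ge> 0\<close> by (simp add: divide_less_eq)
    then have "BS / (cmod z - BS) * (1 / cmod z) < 1 * (1 / cmod z)"
      using zpos by (intro mult_strict_right_mono) auto
    then show ?thesis by (simp add: \<beta>_def mult.commute)
  qed
  finally have "cmod (cst \<mu> z - 1 / z) < cmod (1 / z)" by (simp add: norm_divide)
  then show ?thesis by auto
qed

lemma bounded_msupp_Un_Mset:
  assumes "prob_space \<mu>" and "sets \<mu> = sets borel" and "compact (msupp \<mu>)"
  shows "bounded (msupp \<mu> \<union> Mset \<mu>)"
proof -
  obtain BS where BS: "\<forall>x\<in>msupp \<mu>. cmod x \<le> BS"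
    using compact_imp_bounded[OF assms(3)] by (auto simp: bounded_iff)
  have "Mset \<mu> \<subseteq> cball 0 (2 * BS)"
  proof
    fix z assume "z \<in> Mset \<mu>"
    then have "\<not> cmod z > 2 * BS" using cst_nonzero_far[OF assms(1,2) BS] by (auto simp: Mset_def)
    then show "z \<in> cball 0 (2 * BS)" by simp
  qed
  then have "bounded (Mset \<mu>)" by (rule bounded_subset[OF bounded_cball])
  then show ?thesis using compact_imp_bounded[OF assms(3)] by simp
qed

section \<open>Laws of large numbers for sums of inverses\<close>

context prob_space
begin

lemma prob_sum_deviation_ge_le:
  fixes Y :: "nat \<Rightarrow> 'a \<Rightarrow> real"
  assumes "indep_vars (\<lambda>_. borel) Y UNIV" and "\<And>i x. x \<in> space M \<Longrightarrow> \<bar>Y i x\<bar> \<le> B"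
    and "\<And>i. expectation (Y i) = E" and "t > 0" "B > 0"
  shows "prob {x\<in>space M. real N * t \<le> \<bar>(\<Sum>i\<in>{1..N}. Y i x) - real N * E\<bar>}
           \<le> 2 * exp (- (t^2 / (2 * B^2))) ^ N"
proof (cases "N = 0")
  case True
  then show ?thesis by (simp add: prob_space)
next
  case False
  interpret H: Hoeffding_ineq M "{1..N}" Y "\<lambda>_. - B" "\<lambda>_. B" "\<Sum>i\<in>{1..N}. expectation (Y i)"
  proof unfold_locales
    show "indep_vars (\<lambda>_. borel) Y {1..N}" using indep_vars_subset[OF assms(1)] by auto
    show "AE x in M. Y i x \<in> {- B..B}" for i
      using assms(2)[of _ i] by (intro AE_I2) (force simp: abs_le_iff)
  qed auto
  have "prob {x\<in>space M. real N * t \<le> \<bar>(\<Sum>i\<in>{1..N}. Y i x) - real N * E\<bar>}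
          \<le> 2 * exp (- 2 * (real N * t)^2 / (\<Sum>i\<in>{1..N}. (B - - B)^2))"
    using H.Hoeffding_ineq_abs_ge[of "real N * t"] False assms(3-5) by simp
  also have "- 2 * (real N * t)^2 / (\<Sum>i\<in>{1..N}. (B - - B)^2) = real N * (- (t^2 / (2 * B^2)))"
    using False assms(5) by (simp add: field_simps power2_eq_square)
  finally show ?thesis by (simp only: exp_of_nat_mult)
qed

lemma AE_eventually_sum_deviation_less:
  fixes Y :: "nat \<Rightarrow> 'a \<Rightarrow> real"
  assumes meas: "\<And>i. Y i \<in> borel_measurable M" and "indep_vars (\<lambda>_. borel) Y UNIV"
    and "\<And>i x. x \<in> space M \<Longrightarrow> \<bar>Y i x\<bar> \<le> B"
    and "\<And>i. expectation (Y i) = E" and "t > 0" "B > 0"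
  shows "AE x in M. eventually (\<lambda>N. \<bar>(\<Sum>i\<in>{1..N}. Y i x) - real N * E\<bar> < real N * t) sequentially"
proof -
  define A where "A N = {x\<in>space M. real N * t \<le> \<bar>(\<Sum>i\<in>{1..N}. Y i x) - real N * E\<bar>}" for N
  have [measurable]: "Y i \<in> borel_measurable M" for i by (rule meas)
  have "A N \<in> sets M" for N unfolding A_def by measurable
  moreover have "summable (\<lambda>N. measure M (A N))"
  proof (rule summable_comparison_test'[where N=0])
    show "summable (\<lambda>N. 2 * exp (- (t^2 / (2 * B^2))) ^ N)"
      using assms(5,6) by (intro summable_mult summable_geometric) auto
  qed (use prob_sum_deviation_ge_le[OF assms(2-6)] in \<open>auto simp: A_def\<close>)
  ultimately have "AE x in M. eventually (\<lambda>N. x \<in> space M - A N) sequentially"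
    by (intro borel_cantelli_AE1) (auto simp: emeasure_eq_measure)
  then show ?thesis
    by eventually_elim (auto simp: A_def elim!: eventually_mono)
qed

lemma AE_eventually_sum_deviation_less_distr:
  fixes X :: "nat \<Rightarrow> 'a \<Rightarrow> complex" and f :: "complex \<Rightarrow> real"
  assumes X: "\<And>j. X j \<in> borel_measurable M" "indep_vars (\<lambda>_. borel) X UNIV"
    "\<And>j. distr M borel (X j) = \<mu>"
    and f: "f \<in> borel_measurable borel" "\<And>x. \<bar>f x\<bar> \<le> B"
    and "t > 0" "B > 0"
  shows "AE \<omega> in M. eventually (\<lambda>N.
           \<bar>(\<Sum>j\<in>{1..N}. f (X j \<omega>)) - real N * integral\<^sup>L \<mu> f\<bar> < real N * t) sequentially"
proof (rule AE_eventually_sum_deviation_less[where B = B])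
  show "(\<lambda>\<omega>. f (X i \<omega>)) \<in> borel_measurable M" for i using X(1) f(1) by measurable
  show "indep_vars (\<lambda>_. borel) (\<lambda>i \<omega>. f (X i \<omega>)) UNIV"
    using indep_vars_compose2[OF X(2), of "\<lambda>_. f" "\<lambda>_. borel"] f(1) by auto
  show "expectation (\<lambda>\<omega>. f (X i \<omega>)) = integral\<^sup>L \<mu> f" for i
    using integral_distr[of "X i" M borel f] X(1,3) f(1) by simp
qed (use assms in auto)

lemma AE_eventually_sum_deviation_less_complex:
  fixes X :: "nat \<Rightarrow> 'a \<Rightarrow> complex" and h :: "complex \<Rightarrow> complex"
  assumes X: "\<And>j. X j \<in> borel_measurable M" "indep_vars (\<lambda>_. borel) X UNIV"
    "\<And>j. distr M borel (X j) = \<mu>"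
    and h: "h \<in> borel_measurable borel" "\<And>x. cmod (h x) \<le> B"
    and "t > 0" "B > 0"
  shows "AE \<omega> in M. eventually (\<lambda>N.
           cmod ((\<Sum>j\<in>{1..N}. h (X j \<omega>)) - real N * integral\<^sup>L \<mu> h) < real N * t) sequentially"
proof -
  have "integrable \<mu> h"
  proof -
    interpret \<mu>: prob_space \<mu> using prob_space_distr[OF X(1)] X(3) by metis
    have "h \<in> borel_measurable \<mu>"
      using h(1) measurable_cong_sets[OF sets_distr refl] X(3) by metis
    then show ?thesis using h(2) by (intro \<mu>.integrable_const_bound[where B=B]) auto
  qed
  have "\<bar>Re (h x)\<bar> \<le> B" "\<bar>Im (h x)\<bar> \<le> B" for x
    using h(2)[of x] abs_Re_le_cmod[of "h x"] abs_Im_le_cmod[of "h x"] by linarith+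
  note deviation = AE_eventually_sum_deviation_less_distr[OF X _ this(1) _ \<open>B > 0\<close>]
    AE_eventually_sum_deviation_less_distr[OF X _ this(2) _ \<open>B > 0\<close>]
  have "AE \<omega> in M. eventually (\<lambda>N. \<bar>(\<Sum>j\<in>{1..N}. Re (h (X j \<omega>)))
             - real N * integral\<^sup>L \<mu> (\<lambda>x. Re (h x))\<bar> < real N * (t/2)) sequentially"
    by (rule deviation(1)) (use h(1) \<open>t > 0\<close> in auto)
  moreover have "AE \<omega> in M. eventually (\<lambda>N. \<bar>(\<Sum>j\<in>{1..N}. Im (h (X j \<omega>)))
             - real N * integral\<^sup>L \<mu> (\<lambda>x. Im (h x))\<bar> < real N * (t/2)) sequentially"
    by (rule deviation(2)) (use h(1) \<open>t > 0\<close> in auto)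
  ultimately show ?thesis
  proof eventually_elim
    case (elim \<omega>)
    from elim(1,2) show ?case
    proof eventually_elim
      case (elim N)
      define d where "d = (\<Sum>j\<in>{1..N}. h (X j \<omega>)) - real N * integral\<^sup>L \<mu> h"
      have "\<bar>Re d\<bar> + \<bar>Im d\<bar> < real N * t"
        using elim \<open>integrable \<mu> h\<close> by (simp add: d_def)
      then show ?case using cmod_le[of d] by (simp add: d_def)
    qed
  qed
qed

lemma AE_all_in_msupp:
  fixes X :: "nat \<Rightarrow> 'a \<Rightarrow> complex"
  assumes X: "\<And>j. X j \<in> borel_measurable M" "\<And>j. distr M borel (X j) = \<mu>"
    and "closed (msupp \<mu>)"
  shows "AE \<omega> in M. \<forall>j. X j \<omega> \<in> msupp \<mu>"
proof -
  have "prob_space \<mu>" "sets \<mu> = sets borel"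
    using prob_space_distr[OF X(1)] X(2) sets_distr by metis+
  then have "AE x in distr M borel (X j). x \<in> msupp \<mu>" for j
    unfolding X(2) by (rule AE_in_msupp)
  then have "AE \<omega> in M. X j \<omega> \<in> msupp \<mu>" for j
    using AE_distr_iff[OF X(1), of "\<lambda>x. x \<in> msupp \<mu>"] assms(3) by (simp add: borel_closed)
  then show ?thesis by (simp add: AE_all_countable)
qed

lemma AE_eventually_resolvent_sum_near_cst:
  fixes X :: "nat \<Rightarrow> 'a \<Rightarrow> complex"
  assumes X: "\<And>j. X j \<in> borel_measurable M" "indep_vars (\<lambda>_. borel) X UNIV"
    "\<And>j. distr M borel (X j) = \<mu>"
    and "closed (msupp \<mu>)" and z: "\<forall>x\<in>msupp \<mu>. \<delta> \<le> dist z x" and "\<delta> > 0" "t > 0"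
  shows "AE \<omega> in M. eventually (\<lambda>N.
           cmod ((\<Sum>j\<in>{1..N}. 1 / (z - X j \<omega>)) - real N * cst \<mu> z) < real N * t) sequentially"
proof -
  have \<mu>: "prob_space \<mu>" "sets \<mu> = sets borel"
    using prob_space_distr[OF X(1)] X(3) sets_distr by metis+
  define h where "h x = (if x \<in> msupp \<mu> then 1 / (z - x) else 0)" for x
  have "(\<lambda>x. 1 / (z - x)) \<in> borel_measurable borel" by measurable
  then have h_meas: "h \<in> borel_measurable borel"
    unfolding h_def using assms(4) by (intro measurable_If_set) (auto simp: borel_closed)
  have "cmod (h x) \<le> 1 / \<delta>" for x
    using z \<open>\<delta> > 0\<close> by (simp add: h_def norm_divide dist_norm divide_simps)
  moreover have "0 < 1 / \<delta>" using \<open>\<delta> > 0\<close> by simp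
  ultimately have deviation: "AE \<omega> in M. eventually (\<lambda>N.
      cmod ((\<Sum>j\<in>{1..N}. h (X j \<omega>)) - real N * integral\<^sup>L \<mu> h) < real N * t) sequentially"
    by (intro AE_eventually_sum_deviation_less_complex[OF X h_meas _ \<open>t > 0\<close>])
  have int_h: "integral\<^sup>L \<mu> h = cst \<mu> z"
    unfolding cst_def using AE_in_msupp[OF \<mu>]
    by (intro integral_cong_AE) (auto simp: h_def measurable_cong_sets[OF \<mu>(2) refl] h_meas
        elim!: eventually_mono)
  have "AE \<omega> in M. \<forall>j. h (X j \<omega>) = 1 / (z - X j \<omega>)"
    using AE_all_in_msupp[of X, OF X(1,3) assms(4)] by eventually_elim (auto simp: h_def)
  with deviation show ?thesis
    by eventually_elim (simp add: int_h)
qed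

text \<open>Pointwise laws of large numbers at the centres of a finite net of V, with radii small
  enough that the resolvent sums move by at most a quarter of N |m_\<mu>| at the centre on each ball.\<close>
lemma AE_eventually_resolvent_sum_ge_compact:
  fixes X :: "nat \<Rightarrow> 'a \<Rightarrow> complex" and V :: "complex set"
  assumes X: "\<And>j. X j \<in> borel_measurable M" "indep_vars (\<lambda>_. borel) X UNIV"
    "\<And>j. distr M borel (X j) = \<mu>"
    and closed: "closed (msupp \<mu>)" and "compact V" and "\<delta> > 0"
    and far: "\<forall>z\<in>V. \<forall>x\<in>msupp \<mu>. \<delta> \<le> dist z x" and nonzero: "\<forall>z\<in>V. cst \<mu> z \<noteq> 0"
  shows "\<exists>c>0. AE \<omega> in M. eventually (\<lambda>N.
           \<forall>z\<in>V. c * real N \<le> cmod (\<Sum>j\<in>{1..N}. 1 / (z - X j \<omega>))) sequentially"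
proof -
  obtain F where F: "F \<subseteq> V" "finite F" "V \<subseteq> (\<Union>z\<in>F. ball z (cmod (cst \<mu> z) * \<delta>^2 / 4))"
    using compactE_image[OF \<open>compact V\<close>, of V "\<lambda>z. ball z (cmod (cst \<mu> z) * \<delta>^2 / 4)"]
      nonzero \<open>\<delta> > 0\<close> by force
  define c where "c = Min (insert 1 ((\<lambda>z. cmod (cst \<mu> z) / 2) ` F))"
  have "c > 0" using F nonzero by (auto simp: c_def)
  have c_le: "\<forall>z\<in>F. c \<le> cmod (cst \<mu> z) / 2"
    unfolding c_def using F(2) by (intro ballI Min_le) auto
  have "AE \<omega> in M. eventually (\<lambda>N. cmod ((\<Sum>j\<in>{1..N}. 1 / (z - X j \<omega>)) - real N * cst \<mu> z)
          < real N * (cmod (cst \<mu> z) / 4)) sequentially" if "z \<in> F" for z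
    using that F(1) far nonzero \<open>\<delta> > 0\<close>
    by (intro AE_eventually_resolvent_sum_near_cst[OF X closed]) auto
  then have "AE \<omega> in M. \<forall>z\<in>F. eventually (\<lambda>N. cmod ((\<Sum>j\<in>{1..N}. 1 / (z - X j \<omega>))
          - real N * cst \<mu> z) < real N * (cmod (cst \<mu> z) / 4)) sequentially"
    using F(2) by (subst AE_ball_countable) (auto intro: countable_finite)
  with AE_all_in_msupp[of X, OF X(1,3) closed]
  have "AE \<omega> in M. eventually (\<lambda>N.
          \<forall>z\<in>V. c * real N \<le> cmod (\<Sum>j\<in>{1..N}. 1 / (z - X j \<omega>))) sequentially"
  proof eventually_elim
    case (elim \<omega>)
    note in_supp = elim(1)
    from elim(2) have "eventually (\<lambda>N. \<forall>z\<in>F. cmod ((\<Sum>j\<in>{1..N}. 1 / (z - X j \<omega>))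
        - real N * cst \<mu> z) < real N * (cmod (cst \<mu> z) / 4)) sequentially"
      using F(2) by (intro eventually_ball_finite) auto
    then show ?case
    proof eventually_elim
      case (elim N)
      have "\<forall>z\<in>V. \<forall>j\<in>{1..N}. \<delta> \<le> dist z (X j \<omega>)" using far in_supp by blast
      with elim show ?case
        using norm_sum_inverse_ge_on_cover[OF \<open>\<delta> > 0\<close> F(3,1), of "{1..N}" "\<lambda>j. X j \<omega>"] c_le
        by simp
    qed
  qed
  with \<open>c > 0\<close> show ?thesis by blast
qed

text \<open>On the bounded part of U this is the compact case; far out, every term of the sum is
  close to 1/z.\<close>
lemma AE_eventually_resolvent_sum_ge:
  fixes X :: "nat \<Rightarrow> 'a \<Rightarrow> complex" and U :: "complex set"
  assumes X: "\<And>j. X j \<in> borel_measurable M" "indep_vars (\<lambda>_. borel) X UNIV"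
    "\<And>j. distr M borel (X j) = \<mu>"
    and "compact (msupp \<mu>)" and "closed U" and "\<delta> > 0"
    and far: "\<forall>z\<in>U. \<forall>x\<in>msupp \<mu>. \<delta> \<le> dist z x" and nonzero: "\<forall>z\<in>U. cst \<mu> z \<noteq> 0"
  shows "\<exists>c>0. AE \<omega> in M. eventually (\<lambda>N.
           \<forall>z\<in>U. c * real N / (1 + cmod z) \<le> cmod (\<Sum>j\<in>{1..N}. 1 / (z - X j \<omega>))) sequentially"
proof -
  have closed: "closed (msupp \<mu>)" using \<open>compact (msupp \<mu>)\<close> by (rule compact_imp_closed)
  obtain B where "B > 0" and B: "\<forall>x\<in>msupp \<mu>. cmod x \<le> B"
    using compact_imp_bounded[OF \<open>compact (msupp \<mu>)\<close>] by (auto simp: bounded_pos)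
  define R where "R = 3 * B + 1"
  have "compact (U \<inter> cball 0 R)" using \<open>closed U\<close> by (intro closed_Int_compact) auto
  then obtain c1 where "c1 > 0" and near: "AE \<omega> in M. eventually (\<lambda>N.
      \<forall>z\<in>U \<inter> cball 0 R. c1 * real N \<le> cmod (\<Sum>j\<in>{1..N}. 1 / (z - X j \<omega>))) sequentially"
    using AE_eventually_resolvent_sum_ge_compact[OF X closed _ \<open>\<delta> > 0\<close>] far nonzero by blast
  define c where "c = min c1 (1/2)"
  have "c > 0" using \<open>c1 > 0\<close> by (simp add: c_def)
  from AE_all_in_msupp[of X, OF X(1,3) closed] near
  have "AE \<omega> in M. eventually (\<lambda>N.
      \<forall>z\<in>U. c * real N / (1 + cmod z) \<le> cmod (\<Sum>j\<in>{1..N}. 1 / (z - X j \<omega>))) sequentially"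
  proof eventually_elim
    case (elim \<omega>)
    have "\<forall>j\<in>{1..N}. cmod (X j \<omega>) \<le> B" for N using elim(1) B by blast
    from elim(2) show ?case
    proof eventually_elim
      case (elim N)
      then show ?case
        using norm_sum_inverse_ge_weighted[where c' = c1, of "{1..N}" "\<lambda>j. X j \<omega>" B c]
          \<open>\<forall>j\<in>{1..N}. cmod (X j \<omega>) \<le> B\<close> \<open>B > 0\<close> \<open>c > 0\<close> by (auto simp: c_def R_def)
    qed
  qed
  with \<open>c > 0\<close> show ?thesis by blast
qed

lemma AE_eventually_resolvent_sum_ge_outside_Nnbhd:
  fixes X :: "nat \<Rightarrow> 'a \<Rightarrow> complex"
  assumes X: "\<And>j. X j \<in> borel_measurable M" "indep_vars (\<lambda>_. borel) X UNIV"
    "\<And>j. distr M borel (X j) = \<mu>"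
    and "compact (msupp \<mu>)" and "\<epsilon> > 0"
  shows "\<exists>c>0. AE \<omega> in M. eventually (\<lambda>N. \<forall>z. z \<notin> Nnbhd \<mu> \<epsilon> \<longrightarrow>
           c * real N / (1 + cmod z) \<le> cmod (\<Sum>j\<in>{1..N}. 1 / (z - X j \<omega>))) sequentially"
proof -
  define U where "U = {z. \<epsilon> \<le> infdist z (msupp \<mu> \<union> Mset \<mu>)}"
  have closed: "closed U" unfolding U_def by (intro closed_Collect_le continuous_intros)
  have far: "\<forall>z\<in>U. \<forall>x\<in>msupp \<mu>. \<epsilon> \<le> dist z x"
  proof (intro ballI)
    fix z x assume "z \<in> U" "x \<in> msupp \<mu>"
    then show "\<epsilon> \<le> dist z x" using infdist_le[of x "msupp \<mu> \<union> Mset \<mu>" z] by (simp add: U_def)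
  qed
  have nonzero: "\<forall>z\<in>U. cst \<mu> z \<noteq> 0"
  proof
    fix z assume "z \<in> U"
    then have "z \<notin> msupp \<mu> \<union> Mset \<mu>" using \<open>\<epsilon> > 0\<close> by (auto simp: U_def)
    then show "cst \<mu> z \<noteq> 0" by (auto simp: Mset_def)
  qed
  from AE_eventually_resolvent_sum_ge[where U = U, OF X assms(4) closed \<open>\<epsilon> > 0\<close> far nonzero]
  show ?thesis by (simp add: U_def Nnbhd_def not_less)
qed

end

lemma eventually_sequentially_diff_bounded:
  assumes "eventually P sequentially" and "\<And>n. k n \<le> K"
  shows "eventually (\<lambda>n. P (n - k n)) sequentially"
proof -
  obtain N0 where "\<And>N. N \<ge> N0 \<Longrightarrow> P N" using assms(1) by (auto simp: eventually_sequentially)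
  moreover have "n - k n \<ge> N0" if "n \<ge> N0 + K" for n using that assms(2)[of n] by linarith
  ultimately show ?thesis by (intro eventually_sequentiallyI[of "N0 + K"]) blast
qed

lemma eventually_real_ge_sequentially: "eventually (\<lambda>N. T \<le> real N) sequentially"
  using filterlim_real_sequentially by (simp add: filterlim_at_top)

lemma eventually_unique_far_critical_point:
  fixes x :: "nat \<Rightarrow> complex" and xi :: "nat \<Rightarrow> nat \<Rightarrow> complex" and A :: "complex set"
    and \<epsilon> c BA :: real and k :: "nat \<Rightarrow> nat"
  assumes "\<epsilon> > 0" "c > 0" "BA > 0" and A: "\<forall>a\<in>A. cmod a \<le> BA" and "\<forall>j. x j \<in> A"
    and k: "\<And>n. k n \<le> K"
    and lower: "eventually (\<lambda>N. \<forall>z. 2 * \<epsilon> \<le> infdist z A \<longrightarrow>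
                  c * real N / (1 + cmod z) \<le> cmod (\<Sum>j\<in>{1..N}. 1 / (z - x j))) sequentially"
    and xi: "eventually (\<lambda>n. 1 \<le> k n \<and> 3 * \<epsilon> \<le> infdist (xi n 1) A
                  \<and> (\<forall>l\<in>{2..k n}. infdist (xi n l) A < \<epsilon>)) sequentially"
  shows "eventually (\<lambda>n. \<exists>w.
           {z. poly (pderiv (pn x (k n) (xi n) n)) z = 0 \<and> 2 * \<epsilon> \<le> infdist z A} = {w}
           \<and> order w (pderiv (pn x (k n) (xi n) n)) = 1
           \<and> cmod (w - xi n 1) \<le> 8 / c / real n * (1 + cmod (xi n 1))) sequentially"
proof -
  define \<kappa> where "\<kappa> = \<epsilon> / (1 + BA + 3 * \<epsilon>)"
  have "\<kappa> > 0" using \<open>BA > 0\<close> \<open>\<epsilon> > 0\<close> by (simp add: \<kappa>_def)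
  have large: "eventually (\<lambda>N. K \<le> N \<and> 4 * K \<le> \<kappa> * c * N \<and> 16 \<le> (\<kappa> * c)^2 * N) sequentially"
    using eventually_ge_at_top[of K] eventually_real_ge_sequentially[of "4 * K / (\<kappa> * c)"]
      eventually_real_ge_sequentially[of "16 / (\<kappa> * c)^2"]
    by eventually_elim (use \<open>\<kappa> > 0\<close> \<open>c > 0\<close> in \<open>simp add: divide_le_eq mult.commute\<close>)
  from eventually_sequentially_diff_bounded[of _ k, OF eventually_conj[OF lower large] k] xi
  show ?thesis
  proof eventually_elim
    case (elim n)
    then show ?case
      using assms(1-5) k[of n]
      by (intro unique_far_critical_point[where N = "n - k n" and BA = BA]) (auto simp: \<kappa>_def)
  qed
qed

theorem mainTheorem6:
  fixes M :: "'a measure" and X :: "nat \<Rightarrow> 'a \<Rightarrow> complex"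
    and \<mu> :: "complex measure" and xi :: "nat \<Rightarrow> nat \<Rightarrow> complex"
    and k :: "nat \<Rightarrow> nat" and K :: nat and \<epsilon> :: real
  assumes "prob_space M"
    and "prob_space \<mu>" and "sets \<mu> = sets borel"
    and "compact (msupp \<mu>)"
    and "\<And>j. X j \<in> borel_measurable M"
    and "prob_space.indep_vars M (\<lambda>_. borel) X UNIV"
    and "\<And>j. distr M borel (X j) = \<mu>"
    and "\<And>n. k n \<le> K"
    and "\<epsilon> > 0"
    and "eventually (\<lambda>n. 1 \<le> k n
           \<and> (\<forall>l\<in>{1..k n}. xi n l \<notin> Nnbhd \<mu> (3*\<epsilon>) - Nnbhd \<mu> \<epsilon>)
           \<and> xi n 1 \<notin> Nnbhd \<mu> (3*\<epsilon>)
           \<and> (\<forall>l\<in>{2..k n}. xi n l \<in> Nnbhd \<mu> \<epsilon>)) sequentially"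
  shows "\<exists>C>0. AE \<omega> in M. eventually (\<lambda>n.
           \<exists>w. {z. poly (pderiv (pn (\<lambda>j. X j \<omega>) (k n) (xi n) n)) z = 0 \<and> z \<notin> Nnbhd \<mu> (2*\<epsilon>)} = {w}
             \<and> order w (pderiv (pn (\<lambda>j. X j \<omega>) (k n) (xi n) n)) = 1
             \<and> cmod (w - xi n 1) \<le> C / real n * (1 + cmod (xi n 1))) sequentially"
proof -
  interpret prob_space M by fact
  define A where "A = msupp \<mu> \<union> Mset \<mu>"
  have Nnbhd_eq: "Nnbhd \<mu> r = {z. infdist z A < r}" for r by (simp add: Nnbhd_def A_def)
  obtain BA where "BA > 0" and BA: "\<forall>a\<in>A. cmod a \<le> BA"
    using bounded_msupp_Un_Mset[OF assms(2-4)] by (auto simp: A_def bounded_pos)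
  obtain c where "c > 0" and lower: "AE \<omega> in M. eventually (\<lambda>N. \<forall>z. z \<notin> Nnbhd \<mu> (2 * \<epsilon>) \<longrightarrow>
      c * real N / (1 + cmod z) \<le> cmod (\<Sum>j\<in>{1..N}. 1 / (z - X j \<omega>))) sequentially"
    using AE_eventually_resolvent_sum_ge_outside_Nnbhd[where \<epsilon> = "2 * \<epsilon>", of X, OF assms(5-7,4)]
      assms(9) by auto
  have xi_cond: "eventually (\<lambda>n. 1 \<le> k n \<and> 3 * \<epsilon> \<le> infdist (xi n 1) A
          \<and> (\<forall>l\<in>{2..k n}. infdist (xi n l) A < \<epsilon>)) sequentially"
    using assms(10) by eventually_elim (auto simp: Nnbhd_eq)
  from AE_all_in_msupp[of X, OF assms(5,7) compact_imp_closed[OF assms(4)]] lower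
  have "AE \<omega> in M. eventually (\<lambda>n. \<exists>w.
           {z. poly (pderiv (pn (\<lambda>j. X j \<omega>) (k n) (xi n) n)) z = 0 \<and> 2 * \<epsilon> \<le> infdist z A} = {w}
           \<and> order w (pderiv (pn (\<lambda>j. X j \<omega>) (k n) (xi n) n)) = 1
           \<and> cmod (w - xi n 1) \<le> 8 / c / real n * (1 + cmod (xi n 1))) sequentially"
    by eventually_elim (intro eventually_unique_far_critical_point[OF assms(9) \<open>c > 0\<close> \<open>BA > 0\<close> BA _
          assms(8) _ xi_cond], auto simp: A_def Nnbhd_eq not_less)
  then show ?thesis
    using \<open>c > 0\<close> by (intro exI[of _ "8 / c"]) (auto simp: Nnbhd_eq not_less)
qed

end
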